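(* Let $1\le p<\infty$. Let $\boldsymbol v=(v_n)_{n\in\mathbb{N}}$ and $\boldsymbol w=(w_n)_{n\in\mathbb{N}}$ be weight sequences such that $B_{\boldsymbol v}$ is frequently hypercyclic and $B_{\boldsymbol w}$ is hypercyclic on $\ell_p$. Assume that for all increasing sequences $(m_k)$ and $(n_k)$ of positive integers tending to infinity with $\liminf_{k\to\infty}n_k/m_k>0$ and $\limsup_{k\to\infty}n_k/m_k<1$, \[ \sum_{l\ge1}\frac{|w_1\cdots w_{m_l}|^p}{|v_1\cdots v_{m_l}|^p\,|w_1\cdots w_{m_l-n_l}|^p}=\infty . \] Then $FHC(B_{\boldsymbol v})\cap HC(B_{\boldsymbol w})=\emptyset$.
   Context: $\ell_p$ is the space of complex sequences $(x_n)_{n\ge0}$ with finite $\|x\|_p$, unit vectors $(e_n)_{n\ge0}$. A weight is a bounded sequence of nonzero complex numbers; $B_{\boldsymbol w}e_0=0$, $B_{\boldsymbol w}e_n=w_ne_{n-1}$; the empty product $w_1\cdots w_0$ equals $1$. $HC(T)$ is the set of vectors whose orbit $\{T^nx\}$ is dense; $FHC(T)$ is the set of vectors $x$ such that for every nonempty open $U$, $\{n:T^nx\in U\}$ has positive lower density ($\liminf_n\#(\cdot\cap[1,n])/n>0$). An operator is (frequently) hypercyclic if it has a (frequently) hypercyclic vector. *)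

theory Defs
  imports "HOL-Analysis.Analysis" "HOL-Library.Liminf_Limsup"
begin

definition lp :: "real \<Rightarrow> (nat \<Rightarrow> complex) set" where
  "lp p = {x. summable (\<lambda>n. norm (x n) powr p)}"

definition lp_norm :: "real \<Rightarrow> (nat \<Rightarrow> complex) \<Rightarrow> real" where
  "lp_norm p x = (\<Sum>n. norm (x n) powr p) powr (1 / p)"

text \<open>A weight: bounded sequence of nonzero complex numbers (w 0 plays no role).\<close>
definition is_weight :: "(nat \<Rightarrow> complex) \<Rightarrow> bool" where
  "is_weight w \<longleftrightarrow> bounded (range w) \<and> (\<forall>n\<ge>1. w n \<noteq> 0)"

text \<open>Weighted backward shift: B e_0 = 0, B e_n = w_n e_(n-1), i.e. (B x)_k = w_(k+1) x_(k+1).\<close>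
definition bshift :: "(nat \<Rightarrow> complex) \<Rightarrow> (nat \<Rightarrow> complex) \<Rightarrow> (nat \<Rightarrow> complex)" where
  "bshift w x = (\<lambda>k. w (Suc k) * x (Suc k))"

definition HC :: "real \<Rightarrow> ((nat \<Rightarrow> complex) \<Rightarrow> (nat \<Rightarrow> complex)) \<Rightarrow> (nat \<Rightarrow> complex) set" where
  "HC p T = {x \<in> lp p. \<forall>y \<in> lp p. \<forall>e>0. \<exists>n. lp_norm p ((T ^^ n) x - y) < e}"

definition lower_density :: "nat set \<Rightarrow> ereal" where
  "lower_density A = liminf (\<lambda>n. ereal (real (card (A \<inter> {1..n})) / real n))"

text \<open>Frequently hypercyclic vectors: every nonempty open set (it suffices: every open ball
  of ell_p) is visited along a set of positive lower density.\<close>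
definition FHC :: "real \<Rightarrow> ((nat \<Rightarrow> complex) \<Rightarrow> (nat \<Rightarrow> complex)) \<Rightarrow> (nat \<Rightarrow> complex) set" where
  "FHC p T = {x \<in> lp p. \<forall>y \<in> lp p. \<forall>e>0.
      lower_density {n. lp_norm p ((T ^^ n) x - y) < e} > 0}"

definition hypercyclic :: "real \<Rightarrow> ((nat \<Rightarrow> complex) \<Rightarrow> (nat \<Rightarrow> complex)) \<Rightarrow> bool" where
  "hypercyclic p T \<longleftrightarrow> HC p T \<noteq> {}"

definition freq_hypercyclic :: "real \<Rightarrow> ((nat \<Rightarrow> complex) \<Rightarrow> (nat \<Rightarrow> complex)) \<Rightarrow> bool" where
  "freq_hypercyclic p T \<longleftrightarrow> FHC p T \<noteq> {}"

end

theory Submission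
  imports Defs
begin

text \<open>Suppose x is frequently hypercyclic for B_v and hypercyclic for B_w. Since B_v^m x is
  close to e_0 for a set of m of positive lower density, the m with |v_1 ... v_m x_m| > 1/2
  meet every interval [2n, Kn] with n large, for a fixed K. Hypercyclicity for B_w yields
  arbitrarily late n with B_w^n x small, and its coordinate m - n is w_(m-n+1) ... w_m x_m.
  Dividing the two estimates along interleaved sequences n_l < m_l in this ratio range bounds
  the l-th term of the series in the hypothesis by 2^(-lp), so the series converges: a
  contradiction.\<close>

lemma bshift_funpow: "(bshift w ^^ n) x k = (\<Prod>i\<in>{Suc k..k+n}. w i) * x (k+n)"
proof (induction n arbitrary: k)
  case 0
  then show ?case by simp
next
  case (Suc n)
  have "(bshift w ^^ Suc n) x k = w (Suc k) * (bshift w ^^ n) x (Suc k)"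
    by (simp add: bshift_def)
  also have "\<dots> = (\<Prod>i\<in>{Suc k..k+Suc n}. w i) * x (k+Suc n)"
    by (simp add: Suc prod.atLeast_Suc_atMost)
  finally show ?case .
qed

lemma bshift_zero: "bshift w (\<lambda>k. 0) = (\<lambda>k. 0)"
  by (simp add: bshift_def)

lemma lp_iff_summable_Suc: "x \<in> lp p \<longleftrightarrow> summable (\<lambda>k. norm (x (Suc k)) powr p)"
  unfolding lp_def using summable_Suc_iff[of "\<lambda>n. norm (x n) powr p"] by simp

lemma lp_agree_Suc:
  assumes "z \<in> lp p" "\<And>k. y (Suc k) = z (Suc k)"
  shows "y \<in> lp p"
  using assms by (simp add: lp_iff_summable_Suc)

lemma bshift_in_lp:
  assumes "is_weight w" "p > 0" "x \<in> lp p"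
  shows "bshift w x \<in> lp p"
proof -
  obtain M where M: "\<And>i. norm (w i) \<le> M"
    using assms(1) unfolding is_weight_def bounded_iff by auto
  have "norm (norm (w (Suc k) * x (Suc k)) powr p) \<le> M powr p * norm (x (Suc k)) powr p" for k
    using M assms(2) by (simp add: norm_mult powr_mult mult_right_mono powr_mono2)
  moreover have "summable (\<lambda>k. M powr p * norm (x (Suc k)) powr p)"
    using assms(3) by (simp add: lp_iff_summable_Suc summable_mult)
  ultimately have "summable (\<lambda>k. norm (w (Suc k) * x (Suc k)) powr p)"
    by (metis (no_types, lifting) summable_comparison_test')
  then show ?thesis
    unfolding lp_def bshift_def by simp
qed

lemma funpow_in_lp:
  assumes "\<And>z. z \<in> lp p \<Longrightarrow> T z \<in> lp p" "x \<in> lp p"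
  shows "(T ^^ n) x \<in> lp p"
  by (induction n) (simp_all add: assms)

lemma norm_le_lp_norm:
  assumes "p > 0" "z \<in> lp p"
  shows "norm (z k) \<le> lp_norm p z"
proof -
  have "norm (z k) powr p \<le> (\<Sum>n. norm (z n) powr p)"
    using assms(2) sum_le_suminf[of "\<lambda>n. norm (z n) powr p" "{k}"] unfolding lp_def by simp
  then have "(norm (z k) powr p) powr (1/p) \<le> (\<Sum>n. norm (z n) powr p) powr (1/p)"
    using assms(1) by (intro powr_mono2) auto
  then show ?thesis
    using assms(1) unfolding lp_norm_def by (simp add: powr_powr)
qed

lemma lp_norm_pos:
  assumes "p > 0" "z \<in> lp p" "z \<noteq> (\<lambda>k. 0)"
  shows "lp_norm p z > 0"
proof -
  obtain k where "z k \<noteq> 0"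
    using assms(3) by auto
  then show ?thesis
    using norm_le_lp_norm[OF assms(1,2), of k] by (metis norm_le_zero_iff not_le order.strict_trans2)
qed

lemma lp_norm_zero: "p > 0 \<Longrightarrow> lp_norm p (\<lambda>k. 0) = 0"
  by (simp add: lp_norm_def)

lemma zero_in_lp: "p > 0 \<Longrightarrow> (\<lambda>k. 0) \<in> lp p"
  by (simp add: lp_def)

lemma HC_orbit_late_near_zero:
  assumes "x \<in> HC p T" "p > 0" "T (\<lambda>k. 0) = (\<lambda>k. 0)" "\<And>z. z \<in> lp p \<Longrightarrow> T z \<in> lp p" "\<epsilon> > 0"
  shows "\<exists>n\<ge>L. lp_norm p ((T ^^ n) x) < \<epsilon>"
proof -
  have orbit_lp: "(T ^^ j) x \<in> lp p" for j
    using assms(1,4) funpow_in_lp unfolding HC_def by blast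
  \<comment> \<open>A point of the orbit closer to 0 than all nonzero iterates before time L comes at time
    L or later, unless the orbit has already reached the fixed point 0.\<close>
  define S where "S = {lp_norm p ((T ^^ j) x) | j. j < L \<and> (T ^^ j) x \<noteq> (\<lambda>k. 0)}"
  have "finite S"
    unfolding S_def by simp
  moreover have "\<forall>s\<in>S. s > 0"
    unfolding S_def using lp_norm_pos[OF assms(2) orbit_lp] by blast
  ultimately have "Min (insert \<epsilon> S) > 0"
    using assms(5) by simp
  then obtain n where n: "lp_norm p ((T ^^ n) x) < Min (insert \<epsilon> S)"
    using assms(1) zero_in_lp[OF assms(2)] unfolding HC_def by (fastforce simp: fun_diff_def)
  show ?thesis
  proof (cases "n \<ge> L")
    case True
    then show ?thesis
      using n \<open>finite S\<close> by (intro exI[of _ n]) auto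
  next
    case False
    then have "(T ^^ n) x = (\<lambda>k. 0)"
      using n \<open>finite S\<close> unfolding S_def by (fastforce simp: not_le)
    moreover have "(T ^^ i) (\<lambda>k. 0) = (\<lambda>k. 0)" for i
      by (induction i) (simp_all add: assms(3))
    ultimately have "(T ^^ L) x = (\<lambda>k. 0)"
      using False funpow_add[of "L - n" n T] by simp
    then show ?thesis
      using assms(2,5) by (intro exI[of _ L]) (simp add: lp_norm_zero)
  qed
qed

lemma lower_density_mono:
  assumes "A \<subseteq> B"
  shows "lower_density A \<le> lower_density B"
  unfolding lower_density_def
proof (intro Liminf_mono always_eventually allI)
  fix n
  have "card (A \<inter> {1..n}) \<le> card (B \<inter> {1..n})"
    using assms by (intro card_mono) auto
  then show "ereal (real (card (A \<inter> {1..n})) / real n) \<le> ereal (real (card (B \<inter> {1..n})) / real n)"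
    by (simp add: divide_right_mono)
qed

lemma lower_density_pos_meets_intervals:
  fixes c :: nat
  assumes "lower_density A > 0"
  obtains N K where "\<And>n. n \<ge> N \<Longrightarrow> \<exists>m\<in>A. c * n \<le> m \<and> m \<le> K * n"
proof -
  obtain \<delta> where "\<delta> > 0" and \<delta>: "ereal \<delta> < lower_density A"
    using ereal_dense2[OF assms] by (metis ereal_less(2) less_ereal.simps(1))
  from \<delta> have "eventually (\<lambda>n. ereal \<delta> < ereal (real (card (A \<inter> {1..n})) / real n)) sequentially"
    unfolding lower_density_def by (rule less_LiminfD)
  then obtain N where N: "\<And>n. n \<ge> N \<Longrightarrow> \<delta> < real (card (A \<inter> {1..n})) / real n"
    unfolding eventually_sequentially by auto
  define K where "K = nat \<lceil>c / \<delta>\<rceil> + 1"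
  have "real c / \<delta> \<le> real K"
    using real_nat_ceiling_ge[of "c / \<delta>"] unfolding K_def by simp
  then have "real c \<le> real K * \<delta>"
    using \<open>\<delta> > 0\<close> by (simp add: divide_le_eq)
  have "\<exists>m\<in>A. c * n \<le> m \<and> m \<le> K * n" if "n \<ge> max N 1" for n
  proof (rule ccontr)
    assume "\<not> ?thesis"
    then have "A \<inter> {1..K * n} \<subseteq> {1..<c * n}"
      by auto
    then have "card (A \<inter> {1..K * n}) \<le> card {1..<c * n}"
      by (intro card_mono) auto
    then have "card (A \<inter> {1..K * n}) \<le> c * n"
      by simp
    have "n \<le> K * n"
      unfolding K_def by simp
    then have "\<delta> < real (card (A \<inter> {1..K * n})) / real (K * n)"
      using that by (intro N) linarith
    moreover have "0 < K * n"
      using that unfolding K_def by simp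
    ultimately have "\<delta> * real (K * n) < real (card (A \<inter> {1..K * n}))"
      by (simp add: pos_less_divide_eq)
    moreover have "real (c * n) \<le> \<delta> * real (K * n)"
      using mult_right_mono[OF \<open>real c \<le> real K * \<delta>\<close>, of "real n"] by (simp add: ac_simps)
    ultimately show False
      using \<open>card (A \<inter> {1..K * n}) \<le> c * n\<close> by linarith
  qed
  then show ?thesis
    using that by blast
qed

lemma liminf_ratio_pos:
  assumes "\<And>k. 0 < m k \<and> m k \<le> K * n k"
  shows "0 < liminf (\<lambda>k. ereal (real (n k) / real (m k)))"
proof -
  have "0 < K"
    using assms[of 0] by (cases K) auto
  have "ereal (1 / real K) \<le> liminf (\<lambda>k. ereal (real (n k) / real (m k)))"
  proof (intro Liminf_bounded always_eventually allI)
    fix k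
    have "0 < K * n k"
      using assms[of k] by linarith
    moreover have "real (m k) \<le> real K * real (n k)"
      using assms[of k] by (simp flip: of_nat_mult)
    ultimately show "ereal (1 / real K) \<le> ereal (real (n k) / real (m k))"
      using assms[of k] by (simp add: field_simps)
  qed
  moreover have "0 < ereal (1 / real K)"
    using \<open>0 < K\<close> by simp
  ultimately show ?thesis
    using order.strict_trans2 by blast
qed

lemma limsup_ratio_less_1:
  assumes "1 < c" "\<And>k. c * n k \<le> m k"
  shows "limsup (\<lambda>k. ereal (real (n k) / real (m k))) < 1"
proof -
  have "limsup (\<lambda>k. ereal (real (n k) / real (m k))) \<le> ereal (1 / real c)"
  proof (intro Limsup_bounded always_eventually allI)
    fix k
    have "real c * real (n k) \<le> real (m k)"
      using assms(2)[of k] by (simp flip: of_nat_mult)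
    then show "ereal (real (n k) / real (m k)) \<le> ereal (1 / real c)"
      using assms(1) by (cases "m k = 0") (simp_all add: field_simps)
  qed
  then show ?thesis
    using assms(1) by (simp add: order.strict_trans1)
qed

lemma weight_quotient_le:
  fixes v w :: "nat \<Rightarrow> complex"
  assumes "n \<le> m" "\<forall>i\<ge>1. w i \<noteq> 0"
    and "1/2 < norm ((\<Prod>i\<in>{1..m}. v i) * y)"
    and "norm ((\<Prod>i\<in>{Suc (m - n)..m}. w i) * y) \<le> \<epsilon>"
  shows "norm (\<Prod>i\<in>{1..m}. w i) / (norm (\<Prod>i\<in>{1..m}. v i) * norm (\<Prod>i\<in>{1..m - n}. w i)) \<le> 2 * \<epsilon>"
proof -
  define a where "a = norm (\<Prod>i\<in>{1..m - n}. w i)"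
  define b where "b = norm (\<Prod>i\<in>{1..m}. v i)"
  define d where "d = norm (\<Prod>i\<in>{Suc (m - n)..m}. w i)"
  have "a > 0"
    using assms(2) unfolding a_def by (simp add: prod_zero_iff)
  have "norm (\<Prod>i\<in>{1..m}. w i) = a * d"
    using prod.ub_add_nat[of 1 "m - n" w n] assms(1) unfolding a_def d_def by (simp add: norm_mult)
  then have "norm (\<Prod>i\<in>{1..m}. w i) / (b * a) = (d * norm y) / (b * norm y)"
    using \<open>a > 0\<close> assms(3) unfolding b_def by (auto simp: norm_mult)
  also have "\<dots> \<le> \<epsilon> / (1/2)"
    using assms(3,4) order_trans[OF norm_ge_zero assms(4)] unfolding b_def d_def
    by (intro frac_le) (auto simp: norm_mult)
  finally show ?thesis
    unfolding a_def b_def by simp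
qed

lemma summable_weight_quotients:
  fixes v w :: "nat \<Rightarrow> complex"
  assumes "p > 0" "\<forall>i\<ge>1. w i \<noteq> 0" "\<And>l. n l \<le> m l"
    and "\<And>l. 1/2 < norm ((\<Prod>i\<in>{1..m l}. v i) * x (m l))"
    and "\<And>l. norm ((\<Prod>i\<in>{Suc (m l - n l)..m l}. w i) * x (m l)) \<le> (1/2) ^ Suc l"
  shows "summable (\<lambda>l. norm (\<Prod>i\<in>{1..m l}. w i) powr p /
           (norm (\<Prod>i\<in>{1..m l}. v i) powr p * norm (\<Prod>i\<in>{1..m l - n l}. w i) powr p))"
proof (rule summable_comparison_test'[OF summable_geometric[of "(1/2) powr p"]])
  show "norm ((1/2::real) powr p) < 1"
    using powr_less_mono2[OF assms(1), of "1/2" 1] by simp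
  fix l
  have "norm (\<Prod>i\<in>{1..m l}. w i) / (norm (\<Prod>i\<in>{1..m l}. v i) * norm (\<Prod>i\<in>{1..m l - n l}. w i))
          \<le> (1/2) ^ l"
    using weight_quotient_le[OF assms(3,2,4,5)] by simp
  then have "(norm (\<Prod>i\<in>{1..m l}. w i) / (norm (\<Prod>i\<in>{1..m l}. v i) * norm (\<Prod>i\<in>{1..m l - n l}. w i))) powr p
          \<le> ((1/2) ^ l) powr p"
    using assms(1) by (intro powr_mono2) auto
  also have "\<dots> = ((1/2) powr real l) powr p"
    by (simp add: powr_realpow)
  also have "\<dots> = ((1/2) powr p) powr real l"
    by (rule powr_powr_swap)
  also have "\<dots> = ((1/2) powr p) ^ l"
    by (simp add: powr_realpow)
  finally show "norm (norm (\<Prod>i\<in>{1..m l}. w i) powr p /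
           (norm (\<Prod>i\<in>{1..m l}. v i) powr p * norm (\<Prod>i\<in>{1..m l - n l}. w i) powr p)) \<le> ((1/2) powr p) ^ l"
    by (simp add: powr_divide powr_mult)
qed

lemma FHC_bshift_lower_density:
  assumes "x \<in> FHC p (bshift v)" "is_weight v" "p > 0"
  shows "lower_density {m. 1/2 < norm ((\<Prod>i\<in>{1..m}. v i) * x m)} > 0"
proof -
  define e0 :: "nat \<Rightarrow> complex" where "e0 = (\<lambda>k. if k = 0 then 1 else 0)"
  have "e0 \<in> lp p"
    by (rule lp_agree_Suc[OF zero_in_lp[OF assms(3)]]) (simp add: e0_def)
  then have "\<forall>e>0. lower_density {m. lp_norm p ((bshift v ^^ m) x - e0) < e} > 0"
    using assms(1) unfolding FHC_def by blast
  then have "lower_density {m. lp_norm p ((bshift v ^^ m) x - e0) < 1/2} > 0"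
    by (simp only: half_gt_zero zero_less_one simp_thms)
  moreover have "{m. lp_norm p ((bshift v ^^ m) x - e0) < 1/2}
      \<subseteq> {m. 1/2 < norm ((\<Prod>i\<in>{1..m}. v i) * x m)}"
  proof safe
    fix m
    assume close: "lp_norm p ((bshift v ^^ m) x - e0) < 1/2"
    have "(bshift v ^^ m) x \<in> lp p"
      using assms(1) funpow_in_lp[where T = "bshift v", OF bshift_in_lp[OF assms(2,3)]]
      unfolding FHC_def by blast
    then have "(bshift v ^^ m) x - e0 \<in> lp p"
      by (rule lp_agree_Suc) (simp add: e0_def)
    then have "norm ((\<Prod>i\<in>{1..m}. v i) * x m - 1) < 1/2"
      using norm_le_lp_norm[OF assms(3), of _ 0] close by (force simp: e0_def bshift_funpow)
    then show "1/2 < norm ((\<Prod>i\<in>{1..m}. v i) * x m)"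
      using norm_triangle_ineq2[of 1 "(\<Prod>i\<in>{1..m}. v i) * x m"] by (simp add: norm_minus_commute)
  qed
  ultimately show ?thesis
    using lower_density_mono by (meson order.strict_trans2)
qed

lemma interleaved_sequences:
  assumes "\<And>L l. \<exists>n m. L \<le> n \<and> n < m \<and> P l n m"
  obtains nn mm :: "nat \<Rightarrow> nat" where "strict_mono nn" "strict_mono mm" "\<And>l. P l (nn l) (mm l)"
proof -
  have "\<exists>f. \<forall>l. (fst (f l) < snd (f l) \<and> P l (fst (f l)) (snd (f l))) \<and> snd (f l) < fst (f (Suc l))"
  proof (rule dependent_nat_choice)
    show "\<exists>q. fst q < snd q \<and> P 0 (fst q) (snd q)"
      using assms[of 0 0] by auto
    fix q l
    show "\<exists>q'. (fst q' < snd q' \<and> P (Suc l) (fst q') (snd q')) \<and> snd q < fst q'"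
      using assms[of "Suc (snd q)" "Suc l"] by (fastforce simp: Suc_le_eq)
  qed
  then obtain f where f: "\<And>l. fst (f l) < snd (f l)" "\<And>l. P l (fst (f l)) (snd (f l))"
    "\<And>l. snd (f l) < fst (f (Suc l))"
    by blast
  have "strict_mono (fst \<circ> f)" "strict_mono (snd \<circ> f)"
    unfolding strict_mono_Suc_iff using f(1,3) by (auto intro: less_trans)
  then show ?thesis
    using f(2) that by simp
qed

lemma FHC_HC_bshift_witness_sequences:
  assumes "x \<in> FHC p (bshift v)" "x \<in> HC p (bshift w)" "is_weight v" "is_weight w" "p > 0"
  obtains K and nn mm :: "nat \<Rightarrow> nat"
  where "strict_mono nn" "strict_mono mm" "\<And>l. 0 < nn l \<and> 2 * nn l \<le> mm l \<and> mm l \<le> K * nn l"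
    and "\<And>l. 1/2 < norm ((\<Prod>i\<in>{1..mm l}. v i) * x (mm l))"
    and "\<And>l. norm ((\<Prod>i\<in>{Suc (mm l - nn l)..mm l}. w i) * x (mm l)) \<le> (1/2) ^ Suc l"
proof -
  define A where "A = {m. 1/2 < norm ((\<Prod>i\<in>{1..m}. v i) * x m)}"
  have "lower_density A > 0"
    unfolding A_def by (rule FHC_bshift_lower_density[OF assms(1,3,5)])
  obtain K N where KN: "\<And>n. n \<ge> N \<Longrightarrow> \<exists>m\<in>A. 2 * n \<le> m \<and> m \<le> K * n"
    using lower_density_pos_meets_intervals[where c = 2, OF \<open>lower_density A > 0\<close>] by blast
  define good where "good l n m \<longleftrightarrow> 0 < n \<and> 2 * n \<le> m \<and> m \<le> K * n \<and> m \<in> A \<and>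
      norm ((\<Prod>i\<in>{Suc (m - n)..m}. w i) * x m) \<le> (1/2) ^ Suc l" for l n m
  have good_exists: "\<exists>n m. L \<le> n \<and> n < m \<and> good l n m" for L l
  proof -
    have orbit_lp: "(bshift w ^^ n) x \<in> lp p" for n
      using assms(2) funpow_in_lp[where T = "bshift w", OF bshift_in_lp[OF assms(4,5)]]
      unfolding HC_def by blast
    have "\<exists>n\<ge>max L (max N 1). lp_norm p ((bshift w ^^ n) x) < (1/2) ^ Suc l"
      using assms(2) bshift_in_lp[OF assms(4,5)] by (intro HC_orbit_late_near_zero assms(5) bshift_zero) auto
    then obtain n where n: "max L (max N 1) \<le> n" "lp_norm p ((bshift w ^^ n) x) < (1/2) ^ Suc l"
      by blast
    then obtain m where m: "m \<in> A" "2 * n \<le> m" "m \<le> K * n"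
      using KN by auto
    have "norm ((bshift w ^^ n) x (m - n)) \<le> lp_norm p ((bshift w ^^ n) x)"
      by (rule norm_le_lp_norm[OF assms(5) orbit_lp])
    with n m show ?thesis
      unfolding good_def by (intro exI[of _ n] exI[of _ m]) (auto simp: bshift_funpow)
  qed
  obtain nn mm where "strict_mono nn" "strict_mono mm" "\<And>l. good l (nn l) (mm l)"
    using interleaved_sequences[of good, OF good_exists] by blast
  then show ?thesis
    using that unfolding good_def A_def by blast
qed

theorem proposition4p6:
  fixes p :: real and v w :: "nat \<Rightarrow> complex"
  assumes "1 \<le> p"
    and "is_weight v" and "is_weight w"
    and "freq_hypercyclic p (bshift v)"
    and "hypercyclic p (bshift w)"
    and "\<And>m n :: nat \<Rightarrow> nat.
          mono m \<Longrightarrow> mono n \<Longrightarrow> (\<forall>k. m k > 0 \<and> n k > 0) \<Longrightarrow>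
          filterlim m at_top sequentially \<Longrightarrow> filterlim n at_top sequentially \<Longrightarrow>
          liminf (\<lambda>k. ereal (real (n k) / real (m k))) > 0 \<Longrightarrow>
          limsup (\<lambda>k. ereal (real (n k) / real (m k))) < 1 \<Longrightarrow>
          \<not> summable (\<lambda>l. norm (\<Prod>i\<in>{1..m l}. w i) powr p /
               (norm (\<Prod>i\<in>{1..m l}. v i) powr p * norm (\<Prod>i\<in>{1..m l - n l}. w i) powr p))"
  shows "FHC p (bshift v) \<inter> HC p (bshift w) = {}"
proof (rule equals0I)
  fix x
  assume x: "x \<in> FHC p (bshift v) \<inter> HC p (bshift w)"
  have "p > 0"
    using assms(1) by simp
  obtain K and nn mm :: "nat \<Rightarrow> nat" where "strict_mono nn" "strict_mono mm"
    and ratio: "\<And>l. 0 < nn l \<and> 2 * nn l \<le> mm l \<and> mm l \<le> K * nn l"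
    and large: "\<And>l. 1/2 < norm ((\<Prod>i\<in>{1..mm l}. v i) * x (mm l))"
    and small: "\<And>l. norm ((\<Prod>i\<in>{Suc (mm l - nn l)..mm l}. w i) * x (mm l)) \<le> (1/2) ^ Suc l"
    using FHC_HC_bshift_witness_sequences[OF IntD1[OF x] IntD2[OF x] assms(2,3) \<open>p > 0\<close>] by metis
  let ?q = "\<lambda>l. norm (\<Prod>i\<in>{1..mm l}. w i) powr p /
    (norm (\<Prod>i\<in>{1..mm l}. v i) powr p * norm (\<Prod>i\<in>{1..mm l - nn l}. w i) powr p)"
  have "summable ?q"
    by (rule summable_weight_quotients[OF \<open>p > 0\<close> _ _ large small])
      (use assms(3) ratio in \<open>simp add: is_weight_def, metis le_add2 mult_2 order_trans\<close>)
  moreover have "\<not> summable ?q"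
  proof (rule assms(6))
    show pos: "\<forall>k. 0 < mm k \<and> 0 < nn k"
      using ratio by (metis le_add2 mult_2 order.strict_trans2)
    show "0 < liminf (\<lambda>k. ereal (real (nn k) / real (mm k)))"
      using pos ratio by (intro liminf_ratio_pos[of _ K]) blast
    show "limsup (\<lambda>k. ereal (real (nn k) / real (mm k))) < 1"
      using ratio by (intro limsup_ratio_less_1[of 2]) auto
    show "mono mm" "mono nn" "filterlim mm at_top sequentially" "filterlim nn at_top sequentially"
      using \<open>strict_mono nn\<close> \<open>strict_mono mm\<close> by (simp_all add: strict_mono_mono filterlim_subseq)
  qed
  ultimately show False
    by contradiction
qed

end
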